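(* Let $\mathcal{H}$ and $\mathcal{K}$ be finite-dimensional complex Hilbert spaces and let $\Psi: B(\mathcal{H})\to B(\mathcal{K})$ be a Hermitian-preserving trace-preserving linear map. Then the following are equivalent: (1) $\Psi$ is semi-positive, i.e. there exists an invertible density matrix $\rho\in B(\mathcal{H})$ such that $\Psi(\rho)$ is an invertible density matrix; (2) there exists a positive semidefinite $\rho\in B(\mathcal{H})$ such that $\Psi(\rho)$ is positive definite.
   Context: $B(\mathcal{H})$ denotes all linear operators on $\mathcal{H}$; a density matrix is a positive semidefinite operator of trace one. A map is Hermitian-preserving if $\Psi(X^\dagger)=\Psi(X)^\dagger$ and trace-preserving if $\operatorname{Tr}\Psi(X)=\operatorname{Tr}X$. *)

theory Defs
  imports "HOL-Analysis.Analysis"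
begin

text \<open>Operators on a finite-dimensional complex Hilbert space of dimension CARD('n)
  are represented (in the standard orthonormal basis) as matrices complex^'n^'n.\<close>

definition adj :: "complex^'n^'m \<Rightarrow> complex^'m^'n" where
  "adj A = (\<chi> i j. cnj (A $ j $ i))"

definition cscale :: "complex \<Rightarrow> complex^'n^'m \<Rightarrow> complex^'n^'m" where
  "cscale c A = (\<chi> i j. c * A $ i $ j)"

definition complex_linear_map :: "(complex^'n^'n \<Rightarrow> complex^'m^'m) \<Rightarrow> bool" where
  "complex_linear_map \<Psi> \<longleftrightarrow>
     (\<forall>A B. \<Psi> (A + B) = \<Psi> A + \<Psi> B) \<and> (\<forall>c A. \<Psi> (cscale c A) = cscale c (\<Psi> A))"

definition hermitian_preserving :: "(complex^'n^'n \<Rightarrow> complex^'m^'m) \<Rightarrow> bool" where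
  "hermitian_preserving \<Psi> \<longleftrightarrow> (\<forall>X. \<Psi> (adj X) = adj (\<Psi> X))"

definition trace_preserving :: "(complex^'n^'n \<Rightarrow> complex^'m^'m) \<Rightarrow> bool" where
  "trace_preserving \<Psi> \<longleftrightarrow> (\<forall>X. trace (\<Psi> X) = trace X)"

text \<open>Quadratic form <x, A x> (inner product antilinear in the first argument).\<close>
definition qform :: "complex^'n^'n \<Rightarrow> complex^'n \<Rightarrow> complex" where
  "qform A x = (\<Sum>i\<in>UNIV. cnj (x $ i) * (A *v x) $ i)"

definition psd :: "complex^'n^'n \<Rightarrow> bool" where
  "psd A \<longleftrightarrow> A = adj A \<and> (\<forall>x. Im (qform A x) = 0 \<and> Re (qform A x) \<ge> 0)"

definition pos_def :: "complex^'n^'n \<Rightarrow> bool" where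
  "pos_def A \<longleftrightarrow> A = adj A \<and> (\<forall>x. x \<noteq> 0 \<longrightarrow> Im (qform A x) = 0 \<and> Re (qform A x) > 0)"

definition density_matrix :: "complex^'n^'n \<Rightarrow> bool" where
  "density_matrix A \<longleftrightarrow> psd A \<and> trace A = 1"

definition semi_positive :: "(complex^'n^'n \<Rightarrow> complex^'m^'m) \<Rightarrow> bool" where
  "semi_positive \<Psi> \<longleftrightarrow> (\<exists>\<rho>. density_matrix \<rho> \<and> invertible \<rho> \<and>
       density_matrix (\<Psi> \<rho>) \<and> invertible (\<Psi> \<rho>))"

end

theory Submission
  imports Defs
begin

text \<open>For positive semidefinite \<rho> and t > 0, \<rho> + t 1 is positive definite. If \<Psi>(\<rho>) is
  positive definite, its form is bounded below by l |x|^2 with l > 0 (compactness of the unit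
  sphere), so \<Psi>(\<rho> + t 1) = \<Psi>(\<rho>) + t \<Psi>(1) stays positive definite for small t > 0.
  Dividing by the trace, which \<Psi> preserves, gives density matrices, and positive definite
  matrices are invertible. Conversely, a positive semidefinite form vanishes only on the kernel,
  so an invertible positive semidefinite matrix is positive definite.\<close>

definition sesq :: "complex^'n^'n \<Rightarrow> complex^'n \<Rightarrow> complex^'n \<Rightarrow> complex" where
  "sesq A x y = (\<Sum>i\<in>UNIV. \<Sum>j\<in>UNIV. cnj (x $ i) * A $ i $ j * y $ j)"

lemma qform_eq_sesq: "qform A x = sesq A x x"
  by (simp add: qform_def sesq_def matrix_vector_mult_def sum_distrib_left mult.assoc)

lemma sesq_add_left: "sesq A (x + y) z = sesq A x z + sesq A y z"
  and sesq_add_right: "sesq A x (y + z) = sesq A x y + sesq A x z"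
  and sesq_scale_left: "sesq A (c *s x) z = cnj c * sesq A x z"
  and sesq_scale_right: "sesq A x (c *s z) = c * sesq A x z"
  and sesq_add_matrix: "sesq (A + B) x y = sesq A x y + sesq B x y"
  and sesq_cscale: "sesq (cscale c A) x y = c * sesq A x y"
  by (simp_all add: sesq_def cscale_def algebra_simps sum.distrib sum_distrib_left)

lemma sesq_adj: "sesq (adj A) x y = cnj (sesq A y x)"
  unfolding sesq_def adj_def
  by (subst sum.swap) (simp add: mult.commute mult.left_commute)

lemma sesq_axis_left: "sesq A (axis k c) x = cnj c * (A *v x) $ k"
proof -
  have "(\<Sum>j\<in>UNIV. cnj (axis k c $ i) * A $ i $ j * x $ j) =
      (if i = k then (\<Sum>j\<in>UNIV. cnj c * A $ k $ j * x $ j) else 0)" for i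
    by (simp add: axis_def)
  then show ?thesis
    by (simp add: sesq_def matrix_vector_mult_def sum_distrib_left mult.assoc)
qed

lemma qform_add: "qform (A + B) x = qform A x + qform B x"
  and qform_cscale: "qform (cscale c A) x = c * qform A x"
  and qform_scale: "qform A (c *s x) = cnj c * c * qform A x"
  and qform_zero [simp]: "qform A 0 = 0"
  by (simp_all add: qform_eq_sesq sesq_add_matrix sesq_cscale sesq_scale_left sesq_scale_right)
     (simp add: sesq_def)

lemma qform_add_scaled:
  "qform A (x + c *s y) = qform A x + cnj c * sesq A y x + c * sesq A x y + cnj c * c * qform A y"
  by (simp add: qform_eq_sesq sesq_add_left sesq_add_right sesq_scale_left sesq_scale_right
      algebra_simps)

lemma qform_axis: "qform A (axis i 1) = A $ i $ i"
proof -
  have "qform A (axis i 1) = (A *v axis i 1) $ i"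
    by (simp add: qform_eq_sesq sesq_axis_left)
  also have "\<dots> = A $ i $ i"
    by (simp add: matrix_vector_mult_def axis_def if_distrib cong: if_cong)
  finally show ?thesis .
qed

lemma qform_mat_1: "qform (mat 1) x = of_real ((norm x)\<^sup>2)"
proof -
  have "qform (mat 1) x = (\<Sum>i\<in>UNIV. cnj (x $ i) * x $ i)"
    by (simp add: qform_def)
  also have "\<dots> = (\<Sum>i\<in>UNIV. of_real ((norm (x $ i))\<^sup>2))"
    by (rule sum.cong) (simp_all only: complex_norm_square mult.commute)
  also have "\<dots> = of_real ((norm x)\<^sup>2)"
    by (simp add: norm_vec_def L2_set_def sum_nonneg)
  finally show ?thesis .
qed

lemma Im_qform_hermitian: "A = adj A \<Longrightarrow> Im (qform A x) = 0"
  by (metis qform_eq_sesq sesq_adj complex_cnj_cancel_iff complex_is_Real_iff Reals_cnj_iff)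

lemma adj_add: "adj (A + B) = adj A + adj B"
  and adj_cscale: "adj (cscale c A) = cscale (cnj c) (adj A)"
  and adj_mat_1: "adj (mat 1 :: complex^'n^'n) = mat 1"
  by (simp_all add: adj_def cscale_def mat_def vec_eq_iff)

lemma trace_cscale: "trace (cscale c A) = c * trace A"
  by (simp add: trace_def cscale_def sum_distrib_left)

lemma linear_coeff_eq_0_if_quadratic_nonneg:
  fixes a q :: real
  assumes "\<forall>t. 0 \<le> 2 * t * a + t\<^sup>2 * q"
  shows "a = 0"
proof -
  define d where "d = \<bar>q\<bar> + 1"
  have d: "d > 0" by (simp add: d_def add_nonneg_pos)
  have "0 \<le> 2 * (- a / d) * a + (- a / d)\<^sup>2 * q"
    using assms by blast
  also have "\<dots> \<le> 2 * (- a / d) * a + (- a / d)\<^sup>2 * d"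
    by (intro add_left_mono mult_left_mono) (auto simp: d_def)
  also have "\<dots> = - (a\<^sup>2 / d)"
    using d by (simp add: field_simps power2_eq_square)
  finally have "a\<^sup>2 / d \<le> 0" by simp
  then show ?thesis
    using d by (simp add: divide_le_0_iff)
qed

lemma psd_qform_eq_0_imp_mult_eq_0:
  assumes "psd A" and "qform A x = 0"
  shows "A *v x = 0"
proof -
  have herm: "A = adj A" and nonneg: "\<And>y. 0 \<le> Re (qform A y)"
    using assms(1) by (auto simp: psd_def)
  \<comment> \<open>The form is nonnegative along the real line x + t y, where its value is
    2 t Re <y, A x> + t^2 <y, A y>, so the linear coefficient vanishes.\<close>
  have Re_sesq: "Re (sesq A y x) = 0" for y
  proof (rule linear_coeff_eq_0_if_quadratic_nonneg, intro allI)
    fix t :: real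
    have "sesq A x y = cnj (sesq A y x)"
      by (metis herm sesq_adj)
    then have "qform A (x + of_real t *s y) =
        of_real t * (sesq A y x + cnj (sesq A y x)) + of_real (t\<^sup>2) * qform A y"
      by (simp add: qform_add_scaled assms(2) algebra_simps power2_eq_square)
    then show "0 \<le> 2 * t * Re (sesq A y x) + t\<^sup>2 * Re (qform A y)"
      using nonneg[of "x + of_real t *s y"] by simp
  qed
  show ?thesis
    unfolding vec_eq_iff
  proof
    fix k
    have "Re ((A *v x) $ k) = 0"
      using Re_sesq[of "axis k 1"] by (simp add: sesq_axis_left)
    moreover have "Im ((A *v x) $ k) = 0"
      using Re_sesq[of "axis k \<i>"] by (simp add: sesq_axis_left)
    ultimately show "(A *v x) $ k = 0 $ k"
      by (simp add: complex_eq_iff)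
  qed
qed

lemma invertible_iff_ker_0:
  fixes A :: "'a::field^'n^'n"
  shows "invertible A \<longleftrightarrow> (\<forall>x. A *v x = 0 \<longrightarrow> x = 0)"
  by (simp add: invertible_left_inverse matrix_left_invertible_ker)

lemma psd_invertible_imp_pos_def:
  fixes A :: "complex^'n^'n"
  assumes "psd A" and "invertible A"
  shows "pos_def A"
  unfolding pos_def_def
proof (intro conjI allI impI)
  show herm: "A = adj A" and Im_qform: "Im (qform A x) = 0" for x
    using assms(1) unfolding psd_def by blast+
  fix x :: "complex^'n"
  assume "x \<noteq> 0"
  then have "A *v x \<noteq> 0"
    using assms(2) unfolding invertible_iff_ker_0 by blast
  then have "qform A x \<noteq> 0"
    using psd_qform_eq_0_imp_mult_eq_0[OF assms(1)] by blast
  moreover have "Re (qform A x) \<ge> 0"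
    using assms(1) unfolding psd_def by blast
  ultimately show "Re (qform A x) > 0"
    using Im_qform[of x] by (simp add: complex_eq_iff less_eq_real_def)
qed

lemma pos_def_imp_invertible:
  assumes "pos_def A"
  shows "invertible A"
  unfolding invertible_iff_ker_0
proof (intro allI impI)
  fix x
  assume "A *v x = 0"
  then have "Re (qform A x) = 0"
    by (simp add: qform_def)
  then show "x = 0"
    using assms unfolding pos_def_def by force
qed

lemma pos_def_imp_psd: "pos_def A \<Longrightarrow> psd A"
  unfolding pos_def_def psd_def by (metis less_eq_real_def qform_zero zero_complex.simps)

lemma continuous_on_Re_qform:
  fixes A :: "complex^'n^'n"
  shows "continuous_on S (\<lambda>x. Re (qform A x))"
proof -
  have "continuous_on S (\<lambda>x::complex^'n. x $ i)" for i
    by (simp add: linear_continuous_on bounded_linear_vec_nth)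
  then show ?thesis
    unfolding qform_eq_sesq sesq_def by (intro continuous_intros)
qed

lemma scaleR_eq_of_real_smult: "r *\<^sub>R x = of_real r *s (x::complex^'n)"
  unfolding vec_eq_iff
  by (simp only: vector_smult_component vector_scaleR_component) (simp add: scaleR_conv_of_real)

lemma qform_ge_min_on_sphere:
  fixes A :: "complex^'n^'n"
  obtains u where "norm u = 1" and "\<And>x. Re (qform A u) * (norm x)\<^sup>2 \<le> Re (qform A x)"
proof -
  have "sphere (0::complex^'n) 1 \<noteq> {}"
    by (simp add: sphere_eq_empty)
  then obtain u where u: "u \<in> sphere 0 1"
    and min: "\<And>y. y \<in> sphere 0 1 \<Longrightarrow> Re (qform A u) \<le> Re (qform A y)"
    using continuous_attains_inf[OF compact_sphere _ continuous_on_Re_qform] by blast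
  have "Re (qform A u) * (norm x)\<^sup>2 \<le> Re (qform A x)" for x
  proof (cases "x = 0")
    case False
    define y where "y = of_real (1 / norm x) *s x"
    have "y \<in> sphere 0 1"
      using False unfolding y_def scaleR_eq_of_real_smult[symmetric] by simp
    have "x = of_real (norm x) *s y"
      using False by (simp add: y_def vec_eq_iff)
    then have "qform A x = of_real ((norm x)\<^sup>2) * qform A y"
      by (metis qform_scale complex_cnj_complex_of_real of_real_mult power2_eq_square)
    then have "Re (qform A x) = (norm x)\<^sup>2 * Re (qform A y)"
      by simp
    with min[OF \<open>y \<in> sphere 0 1\<close>] show ?thesis
      by (simp add: mult.commute mult_right_mono)
  qed simp
  with u show thesis
    using that by simp
qed

lemma pos_def_qform_lower_bound:
  fixes A :: "complex^'n^'n"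
  assumes "pos_def A"
  obtains l where "l > 0" and "\<And>x. l * (norm x)\<^sup>2 \<le> Re (qform A x)"
proof -
  obtain u where "norm u = 1" and "\<And>x. Re (qform A u) * (norm x)\<^sup>2 \<le> Re (qform A x)"
    using qform_ge_min_on_sphere by blast
  moreover from \<open>norm u = 1\<close> have "u \<noteq> 0"
    by auto
  then have "Re (qform A u) > 0"
    using assms unfolding pos_def_def by blast
  ultimately show thesis
    using that by blast
qed

lemma pos_def_add_small_hermitian:
  fixes A B :: "complex^'n^'n"
  assumes "pos_def A" and "B = adj B"
  obtains t where "t > 0" and "pos_def (A + cscale (of_real t) B)"
proof -
  obtain l where "l > 0" and lower_A: "\<And>x. l * (norm x)\<^sup>2 \<le> Re (qform A x)"
    using pos_def_qform_lower_bound[OF assms(1)] by blast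
  obtain u where lower_B: "\<And>x. Re (qform B u) * (norm x)\<^sup>2 \<le> Re (qform B x)"
    using qform_ge_min_on_sphere by blast
  define m where "m = Re (qform B u)"
  define t where "t = l / (\<bar>m\<bar> + 1)"
  have "t > 0"
    using \<open>l > 0\<close> by (simp add: t_def add_nonneg_pos)
  have "t * \<bar>m\<bar> < l"
    using \<open>l > 0\<close> by (simp add: t_def field_simps add_nonneg_pos)
  have "pos_def (A + cscale (of_real t) B)"
    unfolding pos_def_def
  proof (intro conjI allI impI)
    have "A = adj A"
      using assms(1) unfolding pos_def_def by blast
    then show "A + cscale (of_real t) B = adj (A + cscale (of_real t) B)"
      using assms(2) by (simp add: adj_add adj_cscale)
    fix x :: "complex^'n"
    assume "x \<noteq> 0"
    have q: "qform (A + cscale (of_real t) B) x = qform A x + of_real t * qform B x"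
      by (simp add: qform_add qform_cscale)
    show "Im (qform (A + cscale (of_real t) B) x) = 0"
      using q Im_qform_hermitian[OF \<open>A = adj A\<close>] Im_qform_hermitian[OF assms(2)] by simp
    have "- (t * \<bar>m\<bar>) \<le> t * m"
      using mult_left_mono[OF abs_ge_minus_self[of m], of t] \<open>t > 0\<close> by simp
    then have "- (t * \<bar>m\<bar>) * (norm x)\<^sup>2 \<le> t * m * (norm x)\<^sup>2"
      by (rule mult_right_mono) simp
    also have "\<dots> \<le> t * Re (qform B x)"
      using lower_B[of x] \<open>t > 0\<close> by (simp add: m_def mult.assoc)
    finally have "- (t * \<bar>m\<bar>) * (norm x)\<^sup>2 \<le> t * Re (qform B x)" .
    moreover have "0 < (l - t * \<bar>m\<bar>) * (norm x)\<^sup>2"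
      using \<open>t * \<bar>m\<bar> < l\<close> \<open>x \<noteq> 0\<close> by simp
    ultimately show "Re (qform (A + cscale (of_real t) B) x) > 0"
      using q lower_A[of x] by (simp add: algebra_simps)
  qed
  with \<open>t > 0\<close> show thesis
    using that by blast
qed

lemma psd_add_pos_def: "psd A \<Longrightarrow> pos_def B \<Longrightarrow> pos_def (A + B)"
  unfolding psd_def pos_def_def by (simp add: adj_add qform_add add_nonneg_pos)

lemma pos_def_mat_1: "pos_def (mat 1)"
  unfolding pos_def_def by (simp add: adj_mat_1 qform_mat_1)

lemma pos_def_cscale: "pos_def A \<Longrightarrow> r > 0 \<Longrightarrow> pos_def (cscale (of_real r) A)"
  unfolding pos_def_def by (simp add: adj_cscale qform_cscale)

lemma pos_def_trace_pos_real:
  fixes A :: "complex^'n^'n"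
  assumes "pos_def A"
  obtains r where "r > 0" and "trace A = of_real r"
proof -
  have diag: "Im (A $ i $ i) = 0" "Re (A $ i $ i) > 0" for i
    using assms unfolding pos_def_def qform_axis[symmetric]
    by (metis axis_eq_0_iff zero_neq_one)+
  have "trace A = of_real (\<Sum>i\<in>UNIV. Re (A $ i $ i))"
    using diag(1) by (simp add: trace_def complex_eq_iff Re_sum Im_sum)
  moreover have "(\<Sum>i\<in>UNIV. Re (A $ i $ i)) > 0"
    using diag(2) by (simp add: sum_pos)
  ultimately show thesis
    using that by blast
qed

lemma pos_def_trace_1_imp_density_invertible:
  "pos_def A \<Longrightarrow> trace A = 1 \<Longrightarrow> density_matrix A \<and> invertible A"
  by (simp add: density_matrix_def pos_def_imp_psd pos_def_imp_invertible)

theorem mainTheorem10: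
  fixes \<Psi> :: "complex^'n^'n \<Rightarrow> complex^'m^'m"
  assumes "complex_linear_map \<Psi>"
    and "hermitian_preserving \<Psi>"
    and "trace_preserving \<Psi>"
  shows "semi_positive \<Psi> \<longleftrightarrow> (\<exists>\<rho>. psd \<rho> \<and> pos_def (\<Psi> \<rho>))"
proof
  assume "semi_positive \<Psi>"
  then show "\<exists>\<rho>. psd \<rho> \<and> pos_def (\<Psi> \<rho>)"
    unfolding semi_positive_def density_matrix_def using psd_invertible_imp_pos_def by blast
next
  assume "\<exists>\<rho>. psd \<rho> \<and> pos_def (\<Psi> \<rho>)"
  then obtain \<rho> where "psd \<rho>" and "pos_def (\<Psi> \<rho>)"
    by blast
  have add: "\<Psi> (A + B) = \<Psi> A + \<Psi> B" and scale: "\<Psi> (cscale c A) = cscale c (\<Psi> A)" for A B c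
    using assms(1) unfolding complex_linear_map_def by blast+
  have "\<Psi> (mat 1) = adj (\<Psi> (mat 1))"
    using assms(2) unfolding hermitian_preserving_def by (metis adj_mat_1)
  then obtain t where "t > 0" and "pos_def (\<Psi> \<rho> + cscale (of_real t) (\<Psi> (mat 1)))"
    using pos_def_add_small_hermitian[OF \<open>pos_def (\<Psi> \<rho>)\<close>] by blast
  moreover define \<sigma> where "\<sigma> = \<rho> + cscale (of_real t) (mat 1)"
  ultimately have "pos_def \<sigma>" and "pos_def (\<Psi> \<sigma>)"
    using \<open>psd \<rho>\<close> psd_add_pos_def pos_def_cscale pos_def_mat_1 by (auto simp: add scale)
  then obtain r where "r > 0" and "trace \<sigma> = of_real r"
    using pos_def_trace_pos_real by blast
  define \<tau> where "\<tau> = cscale (of_real (1 / r)) \<sigma>"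
  have "trace \<tau> = 1" and "trace (\<Psi> \<tau>) = 1"
    using \<open>r > 0\<close> \<open>trace \<sigma> = of_real r\<close> assms(3)
    by (simp_all add: \<tau>_def trace_cscale trace_preserving_def)
  moreover have "pos_def \<tau>" and "pos_def (\<Psi> \<tau>)"
    unfolding \<tau>_def scale using \<open>r > 0\<close>
      pos_def_cscale[OF \<open>pos_def \<sigma>\<close>, of "1 / r"] pos_def_cscale[OF \<open>pos_def (\<Psi> \<sigma>)\<close>, of "1 / r"]
    by simp_all
  ultimately show "semi_positive \<Psi>"
    unfolding semi_positive_def
    using pos_def_trace_1_imp_density_invertible[of \<tau>]
      pos_def_trace_1_imp_density_invertible[of "\<Psi> \<tau>"] by blast
qed

end
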